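(* Let $(\bm{W}_0,\bm{D}_0,f_{0,j}:j=1,\ldots,p)$ and $(\bm{W}_1,\bm{D}_1,f_{1,j}:j=1,\ldots,p)$ be two parameter values of the model in the context that lead to the same distribution of $(\bm{Y}_t:t=1,\ldots,T)$ for every $T=1,2,\ldots$, where all diagonal entries of $\bm{W}_1$ are zero and $\bm{W}_0$ is strictly lower triangular. If, for each $k=0,1$, the set of functions $\{f_{k,j}:j=1,\ldots,p\}$ is linearly independent, then $\bm{W}_0=\bm{W}_1$, $\bm{D}_0=\bm{D}_1$, and $f_{0,j}=f_{1,j}$ for all $j=1,\ldots,p$.
   Context: Model: a $p$-dimensional time series $(\bm{Y}_t)$ satisfies $\bm{Y}_t-\bm{W}\bm{Y}_t=\bm{D}^{1/2}\bm{Z}_t$, where $\bm{W}$ is a $p\times p$ matrix with $\bm{I}-\bm{W}$ invertible, $\bm{D}$ is a diagonal matrix with positive diagonal entries, and $(\bm{Z}_t)$ is a zero-mean stationary Gaussian process whose $p$ components are mutually independent univariate stationary series with unit variance and continuous spectral densities $f_1,\ldots,f_p$ on $[-\pi,\pi]$, where $f_j(\omega)=\gamma_j(0)+2\sum_{h\ge1}\gamma_j(h)\cos(h\omega)$ with $\gamma_j$ the autocovariance function of the $j$th component. *)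

theory Defs
  imports "HOL-Analysis.Analysis"
begin

text \<open>Component-wise autocovariances are given as g :: 'p => nat => real,
  with g j h = gamma_j(h) for lags h >= 0 (gamma_j(-h) = gamma_j(h)).\<close>

definition diag_mat :: "(real ^ 'p) \<Rightarrow> real ^ 'p ^ 'p" where
  "diag_mat v = (\<chi> i j. if i = j then v $ i else 0)"

definition is_diag :: "real ^ 'p ^ 'p \<Rightarrow> bool" where
  "is_diag D \<longleftrightarrow> (\<forall>i j. i \<noteq> j \<longrightarrow> D $ i $ j = 0)"

definition diag_sqrt :: "real ^ 'p ^ 'p \<Rightarrow> real ^ 'p ^ 'p" where
  "diag_sqrt D = diag_mat (\<chi> i. sqrt (D $ i $ i))"

definition spec_dens :: "(nat \<Rightarrow> real) \<Rightarrow> real \<Rightarrow> real" where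
  "spec_dens \<gamma> \<omega> = \<gamma> 0 + 2 * (\<Sum>h. \<gamma> (Suc h) * cos (real (Suc h) * \<omega>))"

definition unit_autocov :: "(nat \<Rightarrow> real) \<Rightarrow> bool" where
  "unit_autocov \<gamma> \<longleftrightarrow> \<gamma> 0 = 1 \<and>
     (\<forall>n (c :: nat \<Rightarrow> real). (\<Sum>s<n. \<Sum>t<n. c s * c t * \<gamma> (nat \<bar>int s - int t\<bar>)) \<ge> 0)"

text \<open>Admissible parameter (W, D, f_1..f_p) of the model, with f_j the
  spectral density of the j-th component of Z (autocovariance g j).\<close>
definition admissible :: "real ^ 'p ^ 'p \<Rightarrow> real ^ 'p ^ 'p \<Rightarrow> ('p \<Rightarrow> nat \<Rightarrow> real) \<Rightarrow> bool" where
  "admissible W D g \<longleftrightarrow>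
     invertible (mat 1 - W) \<and> is_diag D \<and> (\<forall>i. D $ i $ i > 0) \<and>
     (\<forall>j. unit_autocov (g j) \<and>
          (\<forall>\<omega>\<in>{-pi..pi}. summable (\<lambda>h. g j (Suc h) * cos (real (Suc h) * \<omega>))) \<and>
          continuous_on {-pi..pi} (spec_dens (g j)))"

text \<open>Lag-h autocovariance matrix Cov(Y_{t+h}, Y_t), h >= 0, of
  Y_t = (I - W)^{-1} D^{1/2} Z_t, with Cov(Z_{t+h}, Z_t) = diag(gamma_j(h)).
  Since (Y_t) is a zero-mean Gaussian process, the law of (Y_1,...,Y_T) for every T
  is determined by (and determines) these matrices.\<close>
definition Y_autocov :: "real ^ 'p ^ 'p \<Rightarrow> real ^ 'p ^ 'p \<Rightarrow> ('p \<Rightarrow> nat \<Rightarrow> real) \<Rightarrow> nat \<Rightarrow> real ^ 'p ^ 'p" where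
  "Y_autocov W D g h =
     (let A = matrix_inv (mat 1 - W) ** diag_sqrt D
      in A ** diag_mat (\<chi> j. g j h) ** transpose A)"

definition same_fdd :: "real ^ 'p ^ 'p \<Rightarrow> real ^ 'p ^ 'p \<Rightarrow> ('p \<Rightarrow> nat \<Rightarrow> real) \<Rightarrow>
    real ^ 'p ^ 'p \<Rightarrow> real ^ 'p ^ 'p \<Rightarrow> ('p \<Rightarrow> nat \<Rightarrow> real) \<Rightarrow> bool" where
  "same_fdd W0 D0 g0 W1 D1 g1 \<longleftrightarrow>
     (\<forall>T::nat. T \<ge> 1 \<longrightarrow> (\<forall>s t. 1 \<le> s \<and> s \<le> t \<and> t \<le> T \<longrightarrow>
        Y_autocov W0 D0 g0 (t - s) = Y_autocov W1 D1 g1 (t - s)))"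

definition lin_indep_funs :: "('p::finite \<Rightarrow> real \<Rightarrow> real) \<Rightarrow> bool" where
  "lin_indep_funs f \<longleftrightarrow>
     (\<forall>c :: 'p \<Rightarrow> real. (\<forall>\<omega>\<in>{-pi..pi}. (\<Sum>j\<in>UNIV. c j * f j \<omega>) = 0) \<longrightarrow> (\<forall>j. c j = 0))"

end

theory Submission
  imports Defs
begin

(* Let A_k = (I - W_k)^-1 D_k^(1/2), so that Y_t = A_k Z_t and the lag-h autocovariance of Y
   is A_k diag(gamma_kj(h)) A_k^T.  Then M = A_1^-1 A_0 satisfies
   M diag(gamma_0j(h)) M^T = diag(gamma_1j(h)) for every h.  Off the diagonal this reads
   sum_j M_ij M_kj gamma_0j(h) = 0 for all h, hence sum_j M_ij M_kj f_0j = 0, and linear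
   independence of the f_0j leaves at most one nonzero entry in each column of M.
   Moreover A_1^-1 = M A_0^-1, where A_0^-1 = D_0^(-1/2) (I - W_0) is lower triangular and
   A_1^-1 has a positive diagonal, so row i of M has a nonzero entry in some column
   sigma(i) >= i.  The map sigma is injective, hence the identity, and M is diagonal.
   Unit variances and positivity then force M = I, i.e. A_0 = A_1, and the parameters
   coincide.  Only the linear independence for the parameter with index 0 is needed. *)

lemma
  assumes "invertible A"
  shows matrix_inv_right: "A ** matrix_inv A = mat 1"
    and matrix_inv_left: "matrix_inv A ** A = mat 1"
  using someI_ex[OF assms[unfolded invertible_def]] by (simp_all add: matrix_inv_def)

lemma matrix_mult_entry: "(A ** B) $ i $ j = (\<Sum>k\<in>UNIV. A $ i $ k * B $ k $ j)"
  by (simp add: matrix_matrix_mult_def)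

lemma diagonal_mult_entry:
  assumes "\<And>i j. i \<noteq> j \<Longrightarrow> M $ i $ j = 0"
  shows "(M ** B) $ i $ j = M $ i $ i * B $ i $ j"
proof -
  have "(\<Sum>k\<in>UNIV. M $ i $ k * B $ k $ j)
      = (\<Sum>k\<in>UNIV. if k = i then M $ i $ i * B $ i $ j else 0)"
    by (rule sum.cong) (auto simp: assms)
  then show ?thesis
    by (simp add: matrix_mult_entry)
qed

lemma diag_mat_mult_left: "(diag_mat u ** A) $ i $ j = u $ i * A $ i $ j"
  by (simp add: matrix_mult_entry diag_mat_def if_distrib[of "\<lambda>x. x * y" for y] cong: if_cong)

lemma diag_mat_mult_right: "(A ** diag_mat u) $ i $ j = A $ i $ j * u $ j"
  by (simp add: matrix_mult_entry diag_mat_def if_distrib[of "\<lambda>x. y * x" for y] cong: if_cong)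

lemma diag_mat_mult_diag_mat: "diag_mat u ** diag_mat v = diag_mat (\<chi> i. u $ i * v $ i)"
  by (simp add: vec_eq_iff diag_mat_mult_left) (simp add: diag_mat_def)

lemma diag_congruence_entry:
  "(M ** diag_mat v ** transpose M) $ i $ k = (\<Sum>j\<in>UNIV. M $ i $ j * v $ j * M $ k $ j)"
  by (simp add: matrix_mult_entry[of "M ** diag_mat v"] diag_mat_mult_right transpose_def)

lemma diag_congruence_of_diagonal:
  assumes "\<And>i j. i \<noteq> j \<Longrightarrow> M $ i $ j = 0"
  shows "M ** diag_mat v ** transpose M = diag_mat (\<chi> i. (M $ i $ i)\<^sup>2 * v $ i)"
proof -
  have "M $ i $ j * v $ j * M $ k $ j
      = (if j = i then (if i = k then (M $ i $ i)\<^sup>2 * v $ i else 0) else 0)" for i j k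
    using assms by (auto simp: power2_eq_square)
  then show ?thesis
    by (simp add: vec_eq_iff diag_congruence_entry) (simp add: diag_mat_def)
qed

lemma congruence_transfer:
  assumes "A0 ** L0 ** transpose A0 = A1 ** L1 ** transpose A1" and "B ** A1 = mat 1"
  shows "(B ** A0) ** L0 ** transpose (B ** A0) = (L1 :: 'a::comm_semiring_1^'n^'n)"
proof -
  have "(B ** A0) ** L0 ** transpose (B ** A0) = B ** (A0 ** L0 ** transpose A0) ** transpose B"
    by (simp add: matrix_transpose_mul matrix_mul_assoc)
  also have "\<dots> = (B ** A1) ** L1 ** transpose (B ** A1)"
    by (simp add: assms(1) matrix_transpose_mul matrix_mul_assoc)
  finally show ?thesis by (simp add: assms(2))
qed

definition mixing_mat :: "real ^ 'p ^ 'p \<Rightarrow> real ^ 'p ^ 'p \<Rightarrow> real ^ 'p ^ 'p" where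
  "mixing_mat W D = matrix_inv (mat 1 - W) ** diag_sqrt D"

definition unmixing_mat :: "real ^ 'p ^ 'p \<Rightarrow> real ^ 'p ^ 'p \<Rightarrow> real ^ 'p ^ 'p" where
  "unmixing_mat W D = diag_mat (\<chi> i. 1 / sqrt (D $ i $ i)) ** (mat 1 - W)"

lemma Y_autocov_eq_congruence:
  "Y_autocov W D g h = mixing_mat W D ** diag_mat (\<chi> j. g j h) ** transpose (mixing_mat W D)"
  by (simp add: Y_autocov_def mixing_mat_def Let_def)

lemma same_fdd_Y_autocov_eq:
  assumes "same_fdd W0 D0 g0 W1 D1 g1"
  shows "Y_autocov W0 D0 g0 h = Y_autocov W1 D1 g1 h"
  using assms[unfolded same_fdd_def, rule_format, of "Suc h" 1 "Suc h"] by simp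

lemma unmixing_mat_entry:
  "unmixing_mat W D $ i $ j = ((if i = j then 1 else 0) - W $ i $ j) / sqrt (D $ i $ i)"
  by (simp add: unmixing_mat_def diag_mat_mult_left mat_def)

lemma
  assumes "invertible (mat 1 - W)" and "\<forall>i. D $ i $ i \<noteq> 0"
  shows unmixing_mixing_mat: "unmixing_mat W D ** mixing_mat W D = mat 1"
    and mixing_unmixing_mat: "mixing_mat W D ** unmixing_mat W D = mat 1"
proof -
  have "diag_mat (\<chi> i. 1 / sqrt (D $ i $ i)) ** diag_sqrt D = mat 1"
    and "diag_sqrt D ** diag_mat (\<chi> i. 1 / sqrt (D $ i $ i)) = mat 1"
    using assms(2) by (simp_all add: diag_sqrt_def diag_mat_mult_diag_mat)
      (simp_all add: diag_mat_def mat_def vec_eq_iff)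
  with matrix_inv_right[OF assms(1)] matrix_inv_left[OF assms(1)]
  show "unmixing_mat W D ** mixing_mat W D = mat 1"
    and "mixing_mat W D ** unmixing_mat W D = mat 1"
    by (simp_all add: unmixing_mat_def mixing_mat_def matrix_mul_assoc)
      (simp_all flip: matrix_mul_assoc)
qed

lemma unmixing_mat_eqD:
  assumes eq: "unmixing_mat W0 D0 = unmixing_mat W1 D1"
    and "is_diag D0" "is_diag D1" and nz: "\<forall>i. D0 $ i $ i \<noteq> 0"
    and "\<forall>i. W0 $ i $ i = 0" "\<forall>i. W1 $ i $ i = 0"
  shows "W0 = W1 \<and> D0 = D1"
proof -
  have entry: "((if i = j then 1 else 0) - W0 $ i $ j) / sqrt (D0 $ i $ i)
      = ((if i = j then 1 else 0) - W1 $ i $ j) / sqrt (D1 $ i $ i)" for i j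
    using arg_cong[OF eq, of "\<lambda>B. B $ i $ j"] by (simp add: unmixing_mat_entry)
  have D: "D0 $ i $ i = D1 $ i $ i" for i
    using entry[of i i] assms(5,6) by simp
  have "W0 $ i $ j = W1 $ i $ j" for i j
    using entry[of i j] D[of i] nz assms(5,6) by (cases "i = j") auto
  with D assms(2,3) show ?thesis
    by (simp add: vec_eq_iff is_diag_def) metis
qed

lemma spec_dens_lincomb:
  assumes "finite J"
    and "\<And>j. j \<in> J \<Longrightarrow> summable (\<lambda>h. \<gamma> j (Suc h) * cos (real (Suc h) * \<omega>))"
  shows "(\<Sum>j\<in>J. c j * spec_dens (\<gamma> j) \<omega>)
    = spec_dens (\<lambda>h. \<Sum>j\<in>J. c j * \<gamma> j h) \<omega>"
proof -
  define S where "S j = (\<lambda>h. \<gamma> j (Suc h) * cos (real (Suc h) * \<omega>))" for j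
  have "summable (S j)" if "j \<in> J" for j
    using assms(2)[OF that] unfolding S_def .
  then have "(\<Sum>j\<in>J. c j * suminf (S j)) = (\<Sum>h. \<Sum>j\<in>J. c j * S j h)"
    by (simp add: suminf_sum summable_mult suminf_mult)
  moreover have "spec_dens (\<gamma> j) \<omega> = \<gamma> j 0 + 2 * suminf (S j)" for j
    by (simp add: spec_dens_def S_def)
  moreover have "spec_dens (\<lambda>h. \<Sum>j\<in>J. c j * \<gamma> j h) \<omega>
      = (\<Sum>j\<in>J. c j * \<gamma> j 0) + 2 * (\<Sum>h. \<Sum>j\<in>J. c j * S j h)"
    by (simp add: spec_dens_def S_def sum_distrib_right mult.assoc)
  ultimately show ?thesis
    by (simp add: distrib_left sum.distrib mult.left_commute[of _ 2] flip: sum_distrib_left)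
qed

lemma admissible_autocov_lin_indep:
  assumes "admissible W D g" and "lin_indep_funs (\<lambda>j. spec_dens (g j))"
    and "\<And>h. (\<Sum>j\<in>UNIV. c j * g j h) = 0"
  shows "c j = 0"
proof -
  have "(\<Sum>j\<in>UNIV. c j * spec_dens (g j) \<omega>) = 0" if "\<omega> \<in> {-pi..pi}" for \<omega>
    using assms(1) that
    by (simp add: spec_dens_lincomb admissible_def assms(3)) (simp add: spec_dens_def)
  with assms(2) show ?thesis
    unfolding lin_indep_funs_def by blast
qed

lemma finite_inj_extensive_eq_id:
  fixes \<sigma> :: "'a::{finite,linorder} \<Rightarrow> 'a"
  assumes "inj \<sigma>" and "\<And>i. i \<le> \<sigma> i"
  shows "\<sigma> i = i"
proof (rule ccontr)
  assume "\<sigma> i \<noteq> i"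
  with assms(2) have "\<sigma> ` insert i {x. i < x} \<subseteq> {x. i < x}"
    by (auto intro: order.strict_trans2 simp: order.not_eq_order_implies_strict)
  then have "card (\<sigma> ` insert i {x. i < x}) \<le> card {x. i < x}"
    by (simp add: card_mono)
  also have "card (\<sigma> ` insert i {x. i < x}) = card (insert i {x. i < x})"
    by (rule card_image) (rule inj_on_subset[OF assms(1) subset_UNIV])
  finally show False by simp
qed

lemma diagonal_if_disjoint_columns_lower_triangular:
  fixes M B :: "'a::idom ^ 'n::{finite,linorder} ^ 'n::{finite,linorder}"
  assumes cols: "\<And>i k j. i \<noteq> k \<Longrightarrow> M $ i $ j * M $ k $ j = 0"
    and lower: "\<And>i j. i < j \<Longrightarrow> B $ i $ j = 0"
    and diag: "\<And>i. (M ** B) $ i $ i \<noteq> 0"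
    and "i \<noteq> j"
  shows "M $ i $ j = 0"
proof -
  have "\<exists>j. i \<le> j \<and> M $ i $ j \<noteq> 0" for i
  proof -
    have "(\<Sum>k\<in>UNIV. M $ i $ k * B $ k $ i) \<noteq> 0"
      using diag[of i] by (simp add: matrix_mult_entry)
    then obtain j where "M $ i $ j * B $ j $ i \<noteq> 0"
      by (meson sum.neutral)
    with lower[of j i] have "i \<le> j" and "M $ i $ j \<noteq> 0"
      by (auto intro: leI)
    then show ?thesis
      by blast
  qed
  then obtain \<sigma> where \<sigma>: "\<And>i. i \<le> \<sigma> i" "\<And>i. M $ i $ \<sigma> i \<noteq> 0"
    by metis
  have "inj \<sigma>"
  proof (rule injI, rule ccontr)
    fix x y
    assume "\<sigma> x = \<sigma> y" and "x \<noteq> y"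
    with cols[of x y "\<sigma> x"] \<sigma>(2)[of x] \<sigma>(2)[of y] show False
      by simp
  qed
  from finite_inj_extensive_eq_id[OF this \<sigma>(1)] \<sigma>(2) have "M $ j $ j \<noteq> 0"
    by metis
  with cols[of j i j] \<open>i \<noteq> j\<close> show ?thesis
    by simp
qed

lemma diagonal_positive_if_disjoint_columns_triangular:
  fixes M B :: "'a::linordered_idom ^ 'n::{finite,linorder} ^ 'n::{finite,linorder}"
  assumes cols: "\<And>i k j. i \<noteq> k \<Longrightarrow> M $ i $ j * M $ k $ j = 0"
    and lower: "\<And>i j. i < j \<Longrightarrow> B $ i $ j = 0"
    and B_pos: "\<And>i. B $ i $ i > 0" and MB_pos: "\<And>i. (M ** B) $ i $ i > 0"
  shows "i \<noteq> j \<Longrightarrow> M $ i $ j = 0" and "M $ i $ i > 0"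
proof -
  have "(M ** B) $ i $ i \<noteq> 0" for i
    using MB_pos[of i] by simp
  with cols lower have offdiag: "M $ i $ j = 0" if "i \<noteq> j" for i j
    using that by (rule diagonal_if_disjoint_columns_lower_triangular)
  then show "i \<noteq> j \<Longrightarrow> M $ i $ j = 0" .
  show "M $ i $ i > 0"
    using MB_pos[of i] B_pos[of i] by (simp add: diagonal_mult_entry[OF offdiag] zero_less_mult_iff)
qed

lemma autocov_congruence_disjoint_columns:
  assumes "admissible W D g0" and "lin_indep_funs (\<lambda>j. spec_dens (g0 j))"
    and "\<And>h. M ** diag_mat (\<chi> j. g0 j h) ** transpose M = diag_mat (\<chi> j. g1 j h)"
    and "i \<noteq> k"
  shows "M $ i $ j * M $ k $ j = 0"
proof -
  have "(\<Sum>j\<in>UNIV. (M $ i $ j * M $ k $ j) * g0 j h) = 0" for h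
    using arg_cong[OF assms(3)[of h], of "\<lambda>X. X $ i $ k"] assms(4)
    by (simp add: diag_congruence_entry) (simp add: diag_mat_def mult_ac)
  then show ?thesis
    by (rule admissible_autocov_lin_indep[OF assms(1,2)])
qed

lemma admissible_unmixing_relation:
  assumes adm0: "admissible W0 D0 g0" and adm1: "admissible W1 D1 g1"
    and same: "same_fdd W0 D0 g0 W1 D1 g1"
  defines "M \<equiv> unmixing_mat W1 D1 ** mixing_mat W0 D0"
  shows "M ** diag_mat (\<chi> j. g0 j h) ** transpose M = diag_mat (\<chi> j. g1 j h)"
    and "unmixing_mat W1 D1 = M ** unmixing_mat W0 D0"
proof -
  have "invertible (mat 1 - W0)" "invertible (mat 1 - W1)"
    and "\<forall>i. D0 $ i $ i \<noteq> 0" "\<forall>i. D1 $ i $ i \<noteq> 0"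
    using adm0 adm1 by (auto simp: admissible_def less_le)
  note inverses = unmixing_mixing_mat[OF this(2,4)] mixing_unmixing_mat[OF this(1,3)]
  show "M ** diag_mat (\<chi> j. g0 j h) ** transpose M = diag_mat (\<chi> j. g1 j h)"
    unfolding M_def using same_fdd_Y_autocov_eq[OF same, of h]
    by (intro congruence_transfer[OF _ inverses(1)]) (simp add: Y_autocov_eq_congruence)
  show "unmixing_mat W1 D1 = M ** unmixing_mat W0 D0"
    by (simp add: M_def inverses(2) flip: matrix_mul_assoc)
qed

lemma diagonal_congruence_unit_variance:
  assumes diag: "\<And>i j. i \<noteq> j \<Longrightarrow> M $ i $ j = 0" and pos: "\<And>i. M $ i $ i > 0"
    and "\<forall>j. g j 0 = 1" and "\<forall>j. g' j 0 = 1"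
    and cong: "\<And>h. M ** diag_mat (\<chi> j. g j h) ** transpose M = diag_mat (\<chi> j. g' j h)"
  shows "M = mat 1" and "g = g'"
proof -
  have scaled: "g' j h = (M $ j $ j)\<^sup>2 * g j h" for j h
    using arg_cong[OF cong[of h], of "\<lambda>X. X $ j $ j"]
    by (simp add: diag_congruence_of_diagonal diag) (simp add: diag_mat_def)
  have M_diag: "M $ i $ i = 1" for i
    using scaled[of i 0] assms(3,4) pos[of i] power2_eq_1_iff[of "M $ i $ i"] by auto
  then show "M = mat 1"
    by (simp add: vec_eq_iff mat_def diag)
  show "g = g'"
    using scaled M_diag by (simp add: fun_eq_iff)
qed

theorem lemma3:
  fixes W0 D0 W1 D1 :: "real ^ ('p::{finite,linorder}) ^ ('p::{finite,linorder})"
    and g0 g1 :: "('p::{finite,linorder}) \<Rightarrow> nat \<Rightarrow> real"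
  assumes adm0: "admissible W0 D0 g0"
    and adm1: "admissible W1 D1 g1"
    and same: "same_fdd W0 D0 g0 W1 D1 g1"
    and W1_diag: "\<forall>i. W1 $ i $ i = 0"
    and W0_strict_lower: "\<forall>i j. i \<le> j \<longrightarrow> W0 $ i $ j = 0"
    and indep0: "lin_indep_funs (\<lambda>j. spec_dens (g0 j))"
    and indep1: "lin_indep_funs (\<lambda>j. spec_dens (g1 j))"
  shows "W0 = W1 \<and> D0 = D1 \<and>
         (\<forall>j. \<forall>\<omega>\<in>{-pi..pi}. spec_dens (g0 j) \<omega> = spec_dens (g1 j) \<omega>)"
proof -
  have pos: "\<forall>i. D0 $ i $ i > 0" "\<forall>i. D1 $ i $ i > 0"
    and diag: "is_diag D0" "is_diag D1"
    and unit_var: "\<forall>j. g0 j 0 = 1" "\<forall>j. g1 j 0 = 1"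
    using adm0 adm1 by (auto simp: admissible_def unit_autocov_def)
  define B0 where "B0 = unmixing_mat W0 D0"
  define B1 where "B1 = unmixing_mat W1 D1"
  define M where "M = B1 ** mixing_mat W0 D0"
  note cong = admissible_unmixing_relation(1)[OF adm0 adm1 same, folded B1_def, folded M_def]
  have B1_eq: "B1 = M ** B0"
    using admissible_unmixing_relation(2)[OF adm0 adm1 same] by (simp add: B0_def B1_def M_def)
  have B0_lower: "B0 $ i $ j = 0" if "i < j" for i j
    using that W0_strict_lower by (simp add: B0_def unmixing_mat_entry)
  have B0_diag: "B0 $ i $ i > 0" for i
    using pos(1) W0_strict_lower by (simp add: B0_def unmixing_mat_entry)
  have B1_diag: "B1 $ i $ i > 0" for i
    using pos(2) W1_diag by (simp add: B1_def unmixing_mat_entry)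
  note cols = autocov_congruence_disjoint_columns[OF adm0 indep0 cong]
  note M_diagonal = diagonal_positive_if_disjoint_columns_triangular
    [OF cols B0_lower B0_diag B1_diag[unfolded B1_eq]]
  from diagonal_congruence_unit_variance[where g = g0 and g' = g1, OF M_diagonal unit_var cong]
  have "B0 = B1" and "g0 = g1"
    by (simp_all add: B1_eq)
  moreover from \<open>B0 = B1\<close> have "W0 = W1 \<and> D0 = D1"
    unfolding B0_def B1_def
    by (rule unmixing_mat_eqD[OF _ diag])
      (use pos(1) W0_strict_lower W1_diag in \<open>auto simp: less_le\<close>)
  ultimately show ?thesis
    by simp
qed

end
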